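(* For $\epsilon\neq 0$, the map $$\Phi_{\epsilon}(x,y)=\left(\frac{\epsilon(\epsilon+1)x^{2}+\epsilon xy+(1-2\epsilon)x}{D(x,y)},\ \frac{\epsilon(2\epsilon-4)x^{2}-\epsilon(\epsilon+3)xy+6\epsilon x-\epsilon y^{2}+(2\epsilon+1)y}{D(x,y)}\right),$$ $D(x,y)=2\epsilon^{2}x^{2}-\epsilon(\epsilon+1)x-\epsilon y+2\epsilon+1$, admits a Lie symmetry and preserves a measure that is absolutely continuous with respect to the Lebesgue measure.
   Context: A (not identically zero) planar vector field $X$ is a Lie symmetry of a map $F$ if $X(F(\mathbf{x}))=DF(\mathbf{x})\,X(\mathbf{x})$, where $DF$ is the Jacobian matrix of $F$. The measure in question is nonzero. $\Phi_\epsilon$ is the KHK map of $\dot x=x(x+y-2)$, $\dot y=-x(2x+y-3)$. *)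

theory Defs
  imports "HOL-Analysis.Analysis"
begin

text \<open>Where the denominator vanishes the map is undefined mathematically; in HOL
  division by zero yields 0, which only affects a Lebesgue-null set.\<close>

definition khk_D :: "real \<Rightarrow> real \<times> real \<Rightarrow> real" where
  "khk_D e p = (case p of (x, y) \<Rightarrow>
     2 * e^2 * x^2 - e * (e + 1) * x - e * y + 2 * e + 1)"

definition khk_Phi :: "real \<Rightarrow> real \<times> real \<Rightarrow> real \<times> real" where
  "khk_Phi e p = (case p of (x, y) \<Rightarrow>
     ((e * (e + 1) * x^2 + e * x * y + (1 - 2 * e) * x) / khk_D e (x, y),
      (e * (2 * e - 4) * x^2 - e * (e + 3) * x * y + 6 * e * x - e * y^2
        + (2 * e + 1) * y) / khk_D e (x, y)))"

definition lie_symmetry ::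
  "(real \<times> real \<Rightarrow> real \<times> real) \<Rightarrow> (real \<times> real \<Rightarrow> real \<times> real) \<Rightarrow> bool" where
  "lie_symmetry F X \<longleftrightarrow>
     (\<exists>U. open U \<and> closure U = UNIV \<and> continuous_on U X \<and> (\<exists>p\<in>U. X p \<noteq> 0) \<and>
       (\<forall>p\<in>U. F p \<in> U \<longrightarrow>
          (\<exists>F'. (F has_derivative F') (at p) \<and> X (F p) = F' (X p))))"

definition preserves_ac_measure :: "(real \<times> real \<Rightarrow> real \<times> real) \<Rightarrow> bool" where
  "preserves_ac_measure F \<longleftrightarrow>
     (\<exists>\<mu> :: (real \<times> real) measure.
        sets \<mu> = sets lborel \<and> sigma_finite_measure \<mu> \<and>
        absolutely_continuous lborel \<mu> \<and> emeasure \<mu> UNIV \<noteq> 0 \<and>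
        F \<in> borel_measurable borel \<and>
        (\<forall>B \<in> sets borel. emeasure \<mu> (F -` B) = emeasure \<mu> B))"

end

theory Submission
  imports Defs "HOL-Computational_Algebra.Polynomial"
begin

text \<open>The vector field is dx/dt = x H_y, dy/dt = -x H_x with the first integral H = ham.
  Its KHK map Phi_e is birational with inverse Phi_(-e), and outside the null set where den or
  jac_num vanishes it is a local diffeomorphism with Jacobian determinant jac_num / den^3.

  The Lie symmetry is X = -(x H_y, -x H_x) - (0, 2 e^2 x^2 H / (1 + e^2 x^2)); the identity
  X(Phi_e p) = DPhi_e(p) X(p) becomes a polynomial identity once the denominators are cleared.

  By the change of variables formula, the density rho = 1 / |x (1 + e^2 x^2)| is invariant as soon
  as rho(Phi_e p) |det DPhi_e(p)| = rho(p), which amounts to the polynomial identity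
  x' (1 + e^2 x'^2) = x (1 + e^2 x^2) jac_num / den^3 for the first component x' of Phi_e(x, y).\<close>

section \<open>Lebesgue measure in the plane\<close>

text \<open>The library states change of variables only for vectors of type real^'n; these two
  isomorphisms transport it to pairs of reals.\<close>

definition pair_of_vec2 :: "real^2 \<Rightarrow> real \<times> real" where
  "pair_of_vec2 v = (v $ 1, v $ 2)"

definition vec2_of_pair :: "real \<times> real \<Rightarrow> real^2" where
  "vec2_of_pair p = vector [fst p, snd p]"

lemma pair_of_vec2_of_pair [simp]: "pair_of_vec2 (vec2_of_pair p) = p"
  by (simp add: pair_of_vec2_def vec2_of_pair_def)

lemma vec2_of_pair_of_vec2 [simp]: "vec2_of_pair (pair_of_vec2 v) = v"
  by (simp add: pair_of_vec2_def vec2_of_pair_def vec_eq_iff forall_2)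

lemma bounded_linear_pair_of_vec2: "bounded_linear pair_of_vec2"
  by (auto intro!: linearI simp: linear_conv_bounded_linear[symmetric] pair_of_vec2_def)

lemma bounded_linear_vec2_of_pair: "bounded_linear vec2_of_pair"
  by (auto intro!: linearI
      simp: linear_conv_bounded_linear[symmetric] vec2_of_pair_def vec_eq_iff forall_2)

lemma borel_measurable_pair_of_vec2 [measurable]: "pair_of_vec2 \<in> borel_measurable borel"
  by (intro borel_measurable_continuous_onI linear_continuous_on bounded_linear_pair_of_vec2)

lemma Basis_real_pair: "(Basis :: (real \<times> real) set) = {(1, 0), (0, 1)}"
  by (auto simp: Basis_prod_def)

lemma distr_lborel_pair_of_vec2: "distr lborel borel pair_of_vec2 = lborel"
proof (rule lborel_eqI[symmetric])
  fix l u :: "real \<times> real"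
  assume le: "\<And>b. b \<in> Basis \<Longrightarrow> l \<bullet> b \<le> u \<bullet> b"
  have lu: "fst l \<le> fst u" "snd l \<le> snd u"
    using le[of "(1, 0)"] le[of "(0, 1)"] by (auto simp: Basis_real_pair inner_Pair_0)
  have vimage_box: "pair_of_vec2 -` box l u = box (vec2_of_pair l) (vec2_of_pair u)"
    by (auto simp: mem_box_cart mem_box pair_of_vec2_def vec2_of_pair_def Basis_real_pair
        forall_2 inner_Pair_0)
  have Basis_vec2: "(Basis :: (real^2) set) = {axis 1 1, axis 2 1}"
    and axis_ne: "axis 1 (1::real) \<noteq> (axis 2 1 :: real^2)"
    by (auto simp: Basis_vec_def UNIV_2 axis_eq_axis)
  have "emeasure (distr lborel borel pair_of_vec2) (box l u)
      = ennreal ((fst u - fst l) * (snd u - snd l))"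
    using lu axis_ne by (simp add: vimage_box Basis_vec2 emeasure_distr emeasure_lborel_box_eq
        inner_axis vec2_of_pair_def)
  then show "emeasure (distr lborel borel pair_of_vec2) (box l u) = (\<Prod>b\<in>Basis. (u - l) \<bullet> b)"
    by (simp add: Basis_real_pair inner_Pair_0)
qed simp

lemma emeasure_lborel_differentiable_image:
  fixes g :: "real^'n::{finite,wellorder} \<Rightarrow> real^'n::_"
  assumes S: "S \<in> sets borel" and gS: "g ` S \<in> sets borel"
    and g': "\<And>x. x \<in> S \<Longrightarrow> (g has_derivative g' x) (at x)" and inj: "inj_on g S"
    and J: "J \<in> borel_measurable borel" "\<And>x. x \<in> S \<Longrightarrow> J x = \<bar>det (matrix (g' x))\<bar>"
  shows "emeasure lborel (g ` S) = (\<integral>\<^sup>+ x. ennreal (J x) * indicator S x \<partial>lborel)"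
proof -
  have S_leb: "S \<in> sets lebesgue" and gS_leb: "g ` S \<in> sets lebesgue"
    using S gS by simp_all
  have g'_within: "\<And>x. x \<in> S \<Longrightarrow> (g has_derivative g' x) (at x within S)"
    using g' has_derivative_at_withinI by blast
  have emeasure_gS: "emeasure lborel (g ` S) = emeasure lebesgue (g ` S)"
    using gS by simp
  have integrand: "(\<integral>\<^sup>+ x. ennreal (J x) * indicator S x \<partial>lborel)
      = (\<integral>\<^sup>+ x. ennreal \<bar>det (matrix (g' x))\<bar> * indicator S x \<partial>lborel)"
    by (intro nn_integral_cong) (auto simp: J indicator_def)
  show ?thesis
  proof (cases "g ` S \<in> lmeasurable")
    case True
    then have "((\<lambda>x. \<bar>det (matrix (g' x))\<bar>) has_integral measure lebesgue (g ` S)) S"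
      using has_measure_differentiable_image[OF S_leb g'_within inj] by blast
    then have "(\<integral>\<^sup>+ x. ennreal \<bar>det (matrix (g' x))\<bar> * indicator S x \<partial>lborel)
        = ennreal (measure lebesgue (g ` S))"
      by (rule nn_integral_has_integral_lebesgue'[rotated]) simp
    then show ?thesis
      using True by (simp add: emeasure_gS integrand emeasure_eq_measure2)
  next
    case False
    then have "emeasure lebesgue (g ` S) = \<infinity>"
      using gS_leb by (auto intro: fmeasurableI simp: less_top)
    moreover have "(\<integral>\<^sup>+ x. ennreal (J x) * indicator S x \<partial>lborel) = \<infinity>"
    proof (rule ccontr)
      assume "(\<integral>\<^sup>+ x. ennreal (J x) * indicator S x \<partial>lborel) \<noteq> \<infinity>"
      moreover have "(\<integral>\<^sup>+ x. ennreal (J x) * indicator S x \<partial>lborel)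
          = (\<integral>\<^sup>+ x. ennreal (indicator S x * J x) \<partial>lborel)"
        by (intro nn_integral_cong) (simp add: indicator_def)
      ultimately have "(\<lambda>x. indicator S x * J x) integrable_on UNIV"
        using S J by (intro nn_integral_integrable_on) (auto simp: indicator_def less_top)
      then have "(\<lambda>x. if x \<in> S then \<bar>det (matrix (g' x))\<bar> else 0) integrable_on UNIV"
        by (rule integrable_eq) (simp add: J indicator_def)
      then have "(\<lambda>x. \<bar>det (matrix (g' x))\<bar>) integrable_on S"
        by (simp only: integrable_restrict_UNIV)
      then show False
        using False measurable_differentiable_image_eq[OF S_leb g'_within inj] by blast
    qed
    ultimately show ?thesis
      by (simp add: emeasure_gS)
  qed
qed

definition det_pair :: "(real \<times> real \<Rightarrow> real \<times> real) \<Rightarrow> real" where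
  "det_pair L = fst (L (1, 0)) * snd (L (0, 1)) - fst (L (0, 1)) * snd (L (1, 0))"

lemma emeasure_lborel_differentiable_image_pair:
  fixes g :: "real \<times> real \<Rightarrow> real \<times> real"
  assumes S: "S \<in> sets borel" and gS: "g ` S \<in> sets borel"
    and g': "\<And>x. x \<in> S \<Longrightarrow> (g has_derivative g' x) (at x)" and inj: "inj_on g S"
    and J: "J \<in> borel_measurable borel" "\<And>x. x \<in> S \<Longrightarrow> J x = \<bar>det_pair (g' x)\<bar>"
  shows "emeasure lborel (g ` S) = (\<integral>\<^sup>+ x. ennreal (J x) * indicator S x \<partial>lborel)"
proof -
  define h where "h = vec2_of_pair \<circ> g \<circ> pair_of_vec2"
  define h' where "h' = (\<lambda>v. vec2_of_pair \<circ> g' (pair_of_vec2 v) \<circ> pair_of_vec2)"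
  define S' where "S' = pair_of_vec2 -` S"
  have S': "S' \<in> sets borel"
    using measurable_sets[OF borel_measurable_pair_of_vec2 S] by (simp add: S'_def)
  have hS': "h ` S' = pair_of_vec2 -` (g ` S)"
  proof (intro equalityI subsetI)
    fix v assume "v \<in> pair_of_vec2 -` (g ` S)"
    then obtain p where "p \<in> S" "g p = pair_of_vec2 v"
      by force
    then have "v = h (vec2_of_pair p)" "vec2_of_pair p \<in> S'"
      by (simp_all add: h_def S'_def)
    then show "v \<in> h ` S'"
      by blast
  qed (auto simp: h_def S'_def)
  have h': "(h has_derivative h' v) (at v)" if "v \<in> S'" for v
    unfolding h_def h'_def
    using that by (intro diff_chain_at bounded_linear_imp_has_derivative bounded_linear_pair_of_vec2
        bounded_linear_vec2_of_pair g') (simp add: S'_def)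
  have inj_h: "inj_on h S'"
    using inj by (auto simp: inj_on_def h_def S'_def)
      (metis vec2_of_pair_of_vec2 pair_of_vec2_of_pair)
  have det_h': "J (pair_of_vec2 v) = \<bar>det (matrix (h' v))\<bar>" if "v \<in> S'" for v
  proof -
    have "pair_of_vec2 (axis 1 1) = (1, 0)" "pair_of_vec2 (axis 2 1) = (0, 1)"
      by (simp_all add: pair_of_vec2_def axis_def)
    then have "det (matrix (h' v)) = det_pair (g' (pair_of_vec2 v))"
      by (simp add: det_2 matrix_def h'_def det_pair_def vec2_of_pair_def)
    then show ?thesis
      using J(2) that by (simp add: S'_def)
  qed
  have "emeasure lborel (g ` S) = emeasure lborel (h ` S')"
    using gS by (simp add: hS' emeasure_distr distr_lborel_pair_of_vec2[symmetric])
  also have "\<dots> = (\<integral>\<^sup>+ v. ennreal (J (pair_of_vec2 v)) * indicator S' v \<partial>lborel)"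
  proof (rule emeasure_lborel_differentiable_image[OF S' _ h' inj_h _ det_h'])
    show "h ` S' \<in> sets borel"
      using measurable_sets[OF borel_measurable_pair_of_vec2 gS] by (simp add: hS')
    show "(\<lambda>v. J (pair_of_vec2 v)) \<in> borel_measurable borel"
      using J(1) by measurable
  qed
  also have "\<dots> = (\<integral>\<^sup>+ x. ennreal (J x) * indicator S x \<partial>distr lborel borel pair_of_vec2)"
    using S J(1) by (simp add: nn_integral_distr S'_def indicator_def)
  finally show ?thesis
    by (simp add: distr_lborel_pair_of_vec2)
qed

lemma nn_integral_differentiable_image_pair:
  fixes g :: "real \<times> real \<Rightarrow> real \<times> real" and f :: "real \<times> real \<Rightarrow> ennreal"
  assumes S: "S \<in> sets borel" and gS: "g ` S \<in> sets borel" and g: "g \<in> borel_measurable borel"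
    and g': "\<And>x. x \<in> S \<Longrightarrow> (g has_derivative g' x) (at x)" and inj: "inj_on g S"
    and J: "J \<in> borel_measurable borel" "\<And>x. x \<in> S \<Longrightarrow> J x = \<bar>det_pair (g' x)\<bar>"
    and f: "f \<in> borel_measurable borel"
  shows "(\<integral>\<^sup>+ y. f y * indicator (g ` S) y \<partial>lborel)
       = (\<integral>\<^sup>+ x. f (g x) * (ennreal (J x) * indicator S x) \<partial>lborel)"
proof -
  define \<nu> where "\<nu> = density lborel (\<lambda>x. ennreal (J x) * indicator S x)"
  have [measurable]: "S \<in> sets borel" "g ` S \<in> sets borel" "g \<in> borel_measurable borel"
      "J \<in> borel_measurable borel" "f \<in> borel_measurable borel"
    using S gS g J f by auto
  have sets_\<nu> [measurable_cong]: "sets \<nu> = sets borel"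
    by (simp add: \<nu>_def)
  have distr_\<nu>: "distr \<nu> lborel g = density lborel (indicator (g ` S))"
  proof (rule measure_eqI)
    fix A assume "A \<in> sets (distr \<nu> lborel g)"
    then have [measurable]: "A \<in> sets borel"
      by simp
    have image_A: "g ` (g -` A \<inter> S) = A \<inter> g ` S"
      by auto
    have "g -` A \<in> sets borel"
      using measurable_sets[OF g] by simp
    then have "emeasure (distr \<nu> lborel g) A
        = (\<integral>\<^sup>+ x. ennreal (J x) * indicator S x * indicator (g -` A) x \<partial>lborel)"
      by (simp add: emeasure_distr \<nu>_def emeasure_density)
    also have "\<dots> = (\<integral>\<^sup>+ x. ennreal (J x) * indicator (g -` A \<inter> S) x \<partial>lborel)"
      by (intro nn_integral_cong) (auto simp: indicator_def)
    also have "\<dots> = emeasure lborel (g ` (g -` A \<inter> S))"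
    proof (rule emeasure_lborel_differentiable_image_pair[symmetric])
      show "g -` A \<inter> S \<in> sets borel" "g ` (g -` A \<inter> S) \<in> sets borel"
        using \<open>g -` A \<in> sets borel\<close> by (auto simp: image_A)
      show "inj_on g (g -` A \<inter> S)"
        using inj by (rule inj_on_subset) auto
    qed (use g' J in auto)
    also have "\<dots> = emeasure lborel (A \<inter> g ` S)"
      by (simp add: image_A)
    also have "\<dots> = (\<integral>\<^sup>+ y. indicator (A \<inter> g ` S) y \<partial>lborel)"
      by (rule nn_integral_indicator[symmetric]) simp
    also have "\<dots> = (\<integral>\<^sup>+ y. indicator (g ` S) y * indicator A y \<partial>lborel)"
      by (intro nn_integral_cong) (auto simp: indicator_def)
    also have "\<dots> = emeasure (density lborel (indicator (g ` S))) A"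
      by (rule emeasure_density[symmetric]) auto
    finally show "emeasure (distr \<nu> lborel g) A = emeasure (density lborel (indicator (g ` S))) A" .
  qed simp
  have "(\<integral>\<^sup>+ y. f y * indicator (g ` S) y \<partial>lborel) = (\<integral>\<^sup>+ y. f y \<partial>distr \<nu> lborel g)"
    by (simp add: distr_\<nu> nn_integral_density mult.commute)
  also have "\<dots> = (\<integral>\<^sup>+ x. f (g x) \<partial>\<nu>)"
    by (simp add: nn_integral_distr)
  also have "\<dots> = (\<integral>\<^sup>+ x. f (g x) * (ennreal (J x) * indicator S x) \<partial>lborel)"
    by (simp add: \<nu>_def nn_integral_density mult.commute)
  finally show ?thesis .
qed

lemma emeasure_density_vimage_eq:
  fixes g :: "real \<times> real \<Rightarrow> real \<times> real" and \<rho> :: "real \<times> real \<Rightarrow> real"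
  assumes S: "S \<in> sets borel" "AE x in lborel. x \<in> S"
    and gS: "g ` S \<in> sets borel" "AE y in lborel. y \<in> g ` S" and g: "g \<in> borel_measurable borel"
    and g': "\<And>x. x \<in> S \<Longrightarrow> (g has_derivative g' x) (at x)" and inj: "inj_on g S"
    and J: "J \<in> borel_measurable borel" "\<And>x. x \<in> S \<Longrightarrow> J x = \<bar>det_pair (g' x)\<bar>"
    and \<rho>: "\<rho> \<in> borel_measurable borel" "\<And>x. 0 \<le> \<rho> x" "\<And>x. x \<in> S \<Longrightarrow> \<rho> (g x) * J x = \<rho> x"
    and B: "B \<in> sets borel"
  shows "emeasure (density lborel \<rho>) (g -` B) = emeasure (density lborel \<rho>) B"
proof -
  have [measurable]: "g \<in> borel_measurable borel" "\<rho> \<in> borel_measurable borel" "B \<in> sets borel"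
    using g \<rho>(1) B by auto
  have "g -` B \<in> sets borel"
    using measurable_sets[OF g B] by simp
  then have "emeasure (density lborel \<rho>) (g -` B)
      = (\<integral>\<^sup>+ x. ennreal (\<rho> x) * indicator (g -` B) x \<partial>lborel)"
    by (intro emeasure_density) auto
  also have "\<dots> = (\<integral>\<^sup>+ x. ennreal (\<rho> (g x)) * indicator B (g x)
      * (ennreal (J x) * indicator S x) \<partial>lborel)"
    using S(2) by (intro nn_integral_cong_AE, elim AE_mp)
      (auto simp: indicator_def \<rho>(2) J(2) ennreal_mult[symmetric] \<rho>(3)[symmetric])
  also have "\<dots> = (\<integral>\<^sup>+ y. ennreal (\<rho> y) * indicator B y * indicator (g ` S) y \<partial>lborel)"
    by (rule nn_integral_differentiable_image_pair[symmetric, OF S(1) gS(1) g g' inj J]) measurable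
  also have "\<dots> = (\<integral>\<^sup>+ y. ennreal (\<rho> y) * indicator B y \<partial>lborel)"
    using gS(2) by (intro nn_integral_cong_AE, elim AE_mp) (auto simp: indicator_def)
  also have "\<dots> = emeasure (density lborel \<rho>) B"
    by (intro emeasure_density[symmetric]) auto
  finally show ?thesis .
qed

lemma AE_lborel_pair_neq_0:
  fixes P :: "real \<times> real \<Rightarrow> real"
  assumes "P \<in> borel_measurable borel" and "AE x in lborel. finite {y. P (x, y) = 0}"
  shows "AE p in lborel. P p \<noteq> 0"
proof -
  have "AE p in lborel \<Otimes>\<^sub>M lborel. P p \<noteq> 0"
  proof (rule lborel_pair.AE_pair_measure)
    show "{p \<in> space (lborel \<Otimes>\<^sub>M lborel). P p \<noteq> 0} \<in> sets (lborel \<Otimes>\<^sub>M lborel)"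
      unfolding lborel_prod using measurable_sets[OF assms(1), of "- {0}"] by (simp add: vimage_def)
    show "AE x in lborel. AE y in lborel. P (x, y) \<noteq> 0"
      using assms(2) by eventually_elim (auto dest!: finite_imp_null_set_lborel AE_not_in)
  qed
  then show ?thesis
    unfolding lborel_prod .
qed

lemma AE_lborel_fst_neq_0: "AE p in lborel. fst (p :: real \<times> real) \<noteq> 0"
proof (rule AE_lborel_pair_neq_0)
  show "AE x in lborel. finite {y. fst (x, y) = (0::real)}"
  proof -
    have "AE x in lborel. x \<notin> {0::real}"
      by (rule AE_not_in) (simp add: finite_imp_null_set_lborel)
    then show ?thesis
      by eventually_elim simp
  qed
qed (intro borel_measurable_continuous_onI continuous_on_fst continuous_on_id)

lemma emeasure_density_lborel_UNIV_neq_0: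
  fixes f :: "'a::euclidean_space \<Rightarrow> ennreal"
  assumes "f \<in> borel_measurable borel" and "AE x in lborel. 0 < f x"
  shows "emeasure (density lborel f) UNIV \<noteq> 0"
proof
  assume "emeasure (density lborel f) UNIV = 0"
  then have "AE x in lborel. f x = 0"
    using assms(1) by (simp add: emeasure_density nn_integral_0_iff_AE)
  with assms(2) have "AE x in (lborel :: 'a measure). False"
    by eventually_elim simp
  then show False
    by (simp add: eventually_False ae_filter_eq_bot_iff)
qed

lemma closure_eq_UNIV_if_AE_lborel:
  fixes U :: "'a::euclidean_space set"
  assumes "U \<in> sets borel" and "AE x in lborel. x \<in> U"
  shows "closure U = UNIV"
proof -
  have "- U \<in> null_sets lborel"
    using assms by (subst AE_iff_null_sets) auto
  then have "negligible (interior (- U))"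
    by (metis interior_subset negligible_iff_null_sets negligible_subset null_sets_completionI)
  then have "interior (- U) = {}"
    using open_not_negligible by blast
  then show ?thesis
    by (simp add: closure_interior)
qed

section \<open>The KHK map and its Lie symmetry\<close>

lemma has_derivative_quotient:
  fixes a b :: "'a::real_normed_vector \<Rightarrow> real"
  assumes "(a has_derivative a') (at p)" and "(b has_derivative b') (at p)" and "b p \<noteq> 0"
  shows "((\<lambda>q. a q / b q) has_derivative (\<lambda>h. (a' h * b p - a p * b' h) / (b p)^2)) (at p)"
  using has_derivative_divide[OF assms]
  by (rule has_derivative_eq_rhs)
    (use assms(3) in \<open>auto simp: fun_eq_iff field_simps power2_eq_square\<close>)

definition den :: "real \<Rightarrow> real \<Rightarrow> real \<Rightarrow> real" where
  "den e x y = 2 * e^2 * x^2 - e * (e + 1) * x - e * y + 2 * e + 1"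

definition num1 :: "real \<Rightarrow> real \<Rightarrow> real \<Rightarrow> real" where
  "num1 e x y = e * (e + 1) * x^2 + e * x * y + (1 - 2 * e) * x"

definition num2 :: "real \<Rightarrow> real \<Rightarrow> real \<Rightarrow> real" where
  "num2 e x y = e * (2 * e - 4) * x^2 - e * (e + 3) * x * y + 6 * e * x - e * y^2 + (2 * e + 1) * y"

lemma khk_D_eq: "khk_D e (x, y) = den e x y"
  by (simp add: khk_D_def den_def)

lemma khk_Phi_eq: "khk_Phi e = (\<lambda>(x, y). (num1 e x y / den e x y, num2 e x y / den e x y))"
  by (auto simp: fun_eq_iff khk_Phi_def khk_D_def num1_def num2_def den_def)

lemma borel_measurable_khk_Phi: "khk_Phi e \<in> borel_measurable borel"
proof -
  have [measurable]: "(\<lambda>p. num1 e (fst p) (snd p)) \<in> borel_measurable borel"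
      "(\<lambda>p. num2 e (fst p) (snd p)) \<in> borel_measurable borel"
      "(\<lambda>p. den e (fst p) (snd p)) \<in> borel_measurable borel"
    unfolding num1_def num2_def den_def
    by (intro borel_measurable_continuous_onI continuous_intros)+
  show ?thesis
    unfolding khk_Phi_eq case_prod_unfold by measurable
qed

lemma AE_khk_D_neq_0:
  assumes "e \<noteq> 0"
  shows "AE p in lborel. khk_D e p \<noteq> 0"
proof (rule AE_lborel_pair_neq_0)
  show "khk_D e \<in> borel_measurable borel"
    unfolding khk_D_def case_prod_unfold
    by (intro borel_measurable_continuous_onI continuous_intros)
  show "AE x in lborel. finite {y. khk_D e (x, y) = 0}"
  proof (intro AE_I2)
    fix x
    have "{y. khk_D e (x, y) = 0} \<subseteq> {(2 * e^2 * x^2 - e * (e + 1) * x + 2 * e + 1) / e}"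
      using assms by (auto simp: khk_D_def field_simps)
    then show "finite {y. khk_D e (x, y) = 0}"
      by (rule finite_subset) simp
  qed
qed

definition khk_deriv :: "real \<Rightarrow> real \<Rightarrow> real \<Rightarrow> real \<times> real \<Rightarrow> real \<times> real" where
  "khk_deriv e x y = (\<lambda>(u, v).
     ((((2*e*(e+1)*x + e*y + 1 - 2*e) * u + e*x * v) * den e x y
        - num1 e x y * ((4*e^2*x - e*(e+1)) * u - e * v)) / (den e x y)^2,
      (((2*e*(2*e-4)*x - e*(e+3)*y + 6*e) * u + (- e*(e+3)*x - 2*e*y + 2*e + 1) * v) * den e x y
        - num2 e x y * ((4*e^2*x - e*(e+1)) * u - e * v)) / (den e x y)^2))"

lemma has_derivative_khk_Phi:
  assumes "den e x y \<noteq> 0"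
  shows "(khk_Phi e has_derivative khk_deriv e x y) (at (x, y))"
proof -
  have num1: "((\<lambda>p. num1 e (fst p) (snd p)) has_derivative
      (\<lambda>h. (2*e*(e+1)*x + e*y + 1 - 2*e) * fst h + e*x * snd h)) (at (x, y))"
    unfolding num1_def
    by (rule derivative_eq_intros refl | simp)+
      (auto simp: fun_eq_iff algebra_simps power2_eq_square)
  have num2: "((\<lambda>p. num2 e (fst p) (snd p)) has_derivative
      (\<lambda>h. (2*e*(2*e-4)*x - e*(e+3)*y + 6*e) * fst h + (- e*(e+3)*x - 2*e*y + 2*e + 1) * snd h))
      (at (x, y))"
    unfolding num2_def
    by (rule derivative_eq_intros refl | simp)+
      (auto simp: fun_eq_iff algebra_simps power2_eq_square)
  have den: "((\<lambda>p. den e (fst p) (snd p)) has_derivative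
      (\<lambda>h. (4*e^2*x - e*(e+1)) * fst h - e * snd h)) (at (x, y))"
    unfolding den_def
    by (rule derivative_eq_intros refl | simp)+
      (auto simp: fun_eq_iff algebra_simps power2_eq_square)
  have "den e (fst (x, y)) (snd (x, y)) \<noteq> 0"
    using assms by simp
  then show ?thesis
    using has_derivative_Pair[OF has_derivative_quotient[OF num1 den]
        has_derivative_quotient[OF num2 den]]
    by (simp add: khk_Phi_eq khk_deriv_def case_prod_unfold)
qed

definition ham :: "real \<Rightarrow> real \<Rightarrow> real" where
  "ham x y = x^2 + x * y + y^2 / 2 - 3 * x - 2 * y + 5 / 2"

definition qfactor :: "real \<Rightarrow> real \<Rightarrow> real" where
  "qfactor e x = 1 + e^2 * x^2"

lemma qfactor_pos: "qfactor e x > 0"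
  by (simp add: qfactor_def add_pos_nonneg)

definition lie_field :: "real \<Rightarrow> real \<times> real \<Rightarrow> real \<times> real" where
  "lie_field e = (\<lambda>(x, y). (- x * (x + y - 2),
     x * (2 * x + y - 3) - 2 * e^2 * x^2 * ham x y / qfactor e x))"

lemma continuous_on_lie_field: "continuous_on S (lie_field e)"
  using qfactor_pos[of e, THEN less_imp_neq, symmetric]
  unfolding lie_field_def case_prod_unfold qfactor_def ham_def by (intro continuous_intros) auto

lemma lie_field_khk_Phi:
  assumes "den e x y \<noteq> 0"
  shows "lie_field e (khk_Phi e (x, y)) = khk_deriv e x y (lie_field e (x, y))"
proof -
  define N1 N2 D where "N1 = num1 e x y" and "N2 = num2 e x y" and "D = den e x y"
  define q u v where "q = qfactor e x" and "u = - x * (x + y - 2)"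
    and "v = x * (2 * x + y - 3) * q - 2 * e^2 * x^2 * ham x y"
  define E where "E = D^2 + e^2 * N1^2"
  define H where "H = N1^2 + N1 * N2 + N2^2 / 2 - 3 * N1 * D - 2 * N2 * D + 5 / 2 * D^2"
  define Dx where "Dx = 4 * e^2 * x - e * (e + 1)"
  have nz: "D \<noteq> 0" "q \<noteq> 0" "E \<noteq> 0"
    using assms qfactor_pos[of e x] by (auto simp: D_def q_def E_def add_nonneg_eq_0_iff)
  have poly1: "- N1 * (N1 + N2 - 2 * D) * q
      = ((2*e*(e+1)*x + e*y + 1 - 2*e) * u * q + e*x * v) * D - N1 * (Dx * u * q - e * v)"
    unfolding N1_def N2_def D_def q_def u_def v_def Dx_def num1_def num2_def den_def qfactor_def
      ham_def
    by algebra
  have poly2: "N1 * ((2 * N1 + N2 - 3 * D) * E - 2 * e^2 * N1 * H) * q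
      = (((2*e*(2*e-4)*x - e*(e+3)*y + 6*e) * u * q + (- e*(e+3)*x - 2*e*y + 2*e + 1) * v) * D
         - N2 * (Dx * u * q - e * v)) * E"
    unfolding N1_def N2_def D_def q_def u_def v_def E_def H_def Dx_def num1_def num2_def den_def
      qfactor_def ham_def
    by algebra
  have "ham (N1 / D) (N2 / D) = H / D^2" "qfactor e (N1 / D) = E / D^2"
    using nz by (simp_all add: ham_def qfactor_def H_def E_def field_simps power2_eq_square)
  then have "lie_field e (khk_Phi e (x, y)) = (- N1 * (N1 + N2 - 2 * D) * q / (D^2 * q),
      N1 * ((2 * N1 + N2 - 3 * D) * E - 2 * e^2 * N1 * H) * q / (D^2 * E * q))"
    using nz by (simp add: khk_Phi_eq lie_field_def N1_def[symmetric] N2_def[symmetric]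
        D_def[symmetric] field_simps power2_eq_square)
  also have "\<dots> = khk_deriv e x y (u, v / q)"
    unfolding poly1 poly2 using nz
    by (simp add: khk_deriv_def N1_def[symmetric] N2_def[symmetric] D_def[symmetric] Dx_def
        field_simps)
  also have "(u, v / q) = lie_field e (x, y)"
    using nz by (simp add: lie_field_def u_def v_def q_def field_simps)
  finally show ?thesis .
qed

lemma lie_symmetry_khk_Phi:
  assumes "e \<noteq> 0"
  shows "lie_symmetry (khk_Phi e) (lie_field e)"
  unfolding lie_symmetry_def
proof (intro exI[of _ "{p. khk_D e p \<noteq> 0}"] conjI ballI impI)
  have "continuous_on UNIV (khk_D e)"
    unfolding khk_D_def case_prod_unfold by (intro continuous_intros)
  then show U_open: "open {p. khk_D e p \<noteq> 0}"
    by (rule open_Collect_neq[OF _ continuous_on_const])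
  show "closure {p. khk_D e p \<noteq> 0} = UNIV"
    using U_open AE_khk_D_neq_0[OF assms] by (intro closure_eq_UNIV_if_AE_lborel borel_open) auto
  show "continuous_on {p. khk_D e p \<noteq> 0} (lie_field e)"
    by (rule continuous_on_lie_field)
  have "0 < (e + 1 / 2)^2 + 3 / 4"
    by (intro add_nonneg_pos) simp_all
  also have "\<dots> = khk_D e (1, 0)"
    by (simp add: khk_D_def power2_eq_square algebra_simps)
  finally have "khk_D e (1, 0) \<noteq> 0"
    by simp
  moreover have "lie_field e (1, 0) \<noteq> 0"
    by (simp add: lie_field_def zero_prod_def)
  ultimately show "\<exists>p\<in>{p. khk_D e p \<noteq> 0}. lie_field e p \<noteq> 0"
    by blast
  fix p assume "p \<in> {p. khk_D e p \<noteq> 0}"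
  then obtain x y where "p = (x, y)" and "den e x y \<noteq> 0"
    by (cases p) (simp add: khk_D_eq)
  then show "\<exists>F'. (khk_Phi e has_derivative F') (at p)
      \<and> lie_field e (khk_Phi e p) = F' (lie_field e p)"
    using has_derivative_khk_Phi lie_field_khk_Phi by blast
qed

section \<open>The invariant measure\<close>

definition jac_num :: "real \<Rightarrow> real \<Rightarrow> real \<Rightarrow> real" where
  "jac_num e x y = 2 * e^2 * (num1 e x y)^2 + e * (1 - e) * num1 e x y * den e x y
     + e * num2 e x y * den e x y + (1 - 2 * e) * (den e x y)^2"

lemma khk_D_uminus_khk_Phi:
  assumes "den e x y \<noteq> 0"
  shows "khk_D (-e) (khk_Phi e (x, y)) = jac_num e x y / (den e x y)^2"
  using assms by (simp add: khk_Phi_eq khk_D_def jac_num_def field_simps power2_eq_square)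

lemma khk_Phi_uminus_khk_Phi:
  assumes "den e x y \<noteq> 0" and "jac_num e x y \<noteq> 0"
  shows "khk_Phi (-e) (khk_Phi e (x, y)) = (x, y)"
proof -
  define N1 N2 D where "N1 = num1 e x y" and "N2 = num2 e x y" and "D = den e x y"
  have D: "D \<noteq> 0"
    using assms by (simp add: D_def)
  have K: "jac_num e x y = 2 * e^2 * N1^2 + e * (1 - e) * N1 * D + e * N2 * D + (1 - 2 * e) * D^2"
    by (simp add: jac_num_def N1_def N2_def D_def)
  have "num1 (-e) (N1 / D) (N2 / D)
      = (e * (e - 1) * N1^2 - e * N1 * N2 + (1 + 2 * e) * N1 * D) / D^2"
    using D by (simp add: num1_def field_simps power2_eq_square)
  also have "\<dots> = x * jac_num e x y / D^2"
    unfolding K N1_def N2_def D_def num1_def num2_def den_def by algebra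
  finally have num1_Phi: "num1 (-e) (N1 / D) (N2 / D) = x * jac_num e x y / D^2" .
  have "num2 (-e) (N1 / D) (N2 / D) = (2 * e * (e + 2) * N1^2 - e * (e - 3) * N1 * N2
      - 6 * e * N1 * D + e * N2^2 + (1 - 2 * e) * N2 * D) / D^2"
    using D by (simp add: num2_def field_simps power2_eq_square)
  also have "\<dots> = y * jac_num e x y / D^2"
    unfolding K N1_def N2_def D_def num1_def num2_def den_def by algebra
  finally have num2_Phi: "num2 (-e) (N1 / D) (N2 / D) = y * jac_num e x y / D^2" .
  have "den (-e) (N1 / D) (N2 / D) = jac_num e x y / D^2"
    using khk_D_uminus_khk_Phi[OF assms(1)] by (simp add: khk_Phi_eq khk_D_eq N1_def N2_def D_def)
  then show ?thesis
    using D assms(2) by (simp add: khk_Phi_eq N1_def[symmetric] N2_def[symmetric] D_def[symmetric]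
        num1_Phi num2_Phi)
qed

lemma det_pair_khk_deriv:
  assumes "den e x y \<noteq> 0"
  shows "det_pair (khk_deriv e x y) = jac_num e x y / (den e x y)^3"
proof -
  define N1 N2 D where "N1 = num1 e x y" and "N2 = num2 e x y" and "D = den e x y"
  define A11 A21 where "A11 = (2*e*(e+1)*x + e*y + 1 - 2*e) * D - N1 * (4*e^2*x - e*(e+1))"
    and "A21 = (2*e*(2*e-4)*x - e*(e+3)*y + 6*e) * D - N2 * (4*e^2*x - e*(e+1))"
  define A12 A22 where "A12 = e*x * D + e * N1"
    and "A22 = (- e*(e+3)*x - 2*e*y + 2*e + 1) * D + e * N2"
  have "khk_deriv e x y (1, 0) = (A11 / D^2, A21 / D^2)"
    and "khk_deriv e x y (0, 1) = (A12 / D^2, A22 / D^2)"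
    by (simp_all add: khk_deriv_def N1_def N2_def D_def A11_def A21_def A12_def A22_def)
  then have "det_pair (khk_deriv e x y) = (A11 * A22 - A12 * A21) / D^4"
    using assms by (simp add: det_pair_def D_def field_simps power4_eq_xxxx power2_eq_square)
  also have "A11 * A22 - A12 * A21 = jac_num e x y * D"
    unfolding A11_def A21_def A12_def A22_def N1_def N2_def D_def
      jac_num_def num1_def num2_def den_def
    by algebra
  finally show ?thesis
    using assms by (simp add: D_def power4_eq_xxxx power3_eq_cube)
qed

lemma fst_khk_Phi_qfactor:
  assumes "den e x y \<noteq> 0"
  shows "fst (khk_Phi e (x, y)) * qfactor e (fst (khk_Phi e (x, y)))
    = x * qfactor e x * (jac_num e x y / (den e x y)^3)"
proof -
  have "x * qfactor e x * jac_num e x y = num1 e x y * ((den e x y)^2 + e^2 * (num1 e x y)^2)"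
    unfolding qfactor_def jac_num_def num1_def num2_def den_def by algebra
  then show ?thesis
    using assms by (simp add: khk_Phi_eq qfactor_def field_simps power2_eq_square power3_eq_cube)
qed

definition khk_regular :: "real \<Rightarrow> (real \<times> real) set" where
  "khk_regular e = {(x, y). den e x y \<noteq> 0 \<and> jac_num e x y \<noteq> 0}"

lemma khk_Phi_regular:
  assumes "p \<in> khk_regular e"
  shows "khk_Phi e p \<in> khk_regular (-e)" and "khk_Phi (-e) (khk_Phi e p) = p"
proof -
  obtain x y where p: "p = (x, y)" and D: "den e x y \<noteq> 0" and K: "jac_num e x y \<noteq> 0"
    using assms by (cases p) (auto simp: khk_regular_def)
  obtain a b where Phi_p: "khk_Phi e (x, y) = (a, b)"
    by (cases "khk_Phi e (x, y)")
  show inverse: "khk_Phi (-e) (khk_Phi e p) = p"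
    using khk_Phi_uminus_khk_Phi[OF D K] by (simp add: p)
  have D': "den (-e) a b \<noteq> 0"
    using khk_D_uminus_khk_Phi[OF D] D K by (simp add: Phi_p khk_D_eq)
  have "den e x y = jac_num (-e) a b / (den (-e) a b)^2"
    using khk_D_uminus_khk_Phi[OF D'] inverse by (simp add: p Phi_p khk_D_eq)
  then have "jac_num (-e) a b \<noteq> 0"
    using D by auto
  then show "khk_Phi e p \<in> khk_regular (-e)"
    using D' by (simp add: p Phi_p khk_regular_def)
qed

lemma khk_Phi_image_regular: "khk_Phi e ` khk_regular e = khk_regular (-e)"
proof (intro equalityI subsetI)
  fix q assume "q \<in> khk_regular (-e)"
  then show "q \<in> khk_Phi e ` khk_regular e"
    using khk_Phi_regular[of q "-e"] by (metis image_eqI minus_minus)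
qed (auto intro: khk_Phi_regular(1))

lemma inj_on_khk_Phi_regular: "inj_on (khk_Phi e) (khk_regular e)"
  by (rule inj_on_inverseI[where g = "khk_Phi (-e)"]) (rule khk_Phi_regular(2))

lemma continuous_on_jac_num: "continuous_on S (\<lambda>p. jac_num e (fst p) (snd p))"
  unfolding jac_num_def num1_def num2_def den_def by (intro continuous_intros)

lemma open_khk_regular: "open (khk_regular e)"
proof -
  have "khk_regular e = {p. khk_D e p \<noteq> 0} \<inter> {p. jac_num e (fst p) (snd p) \<noteq> 0}"
    by (auto simp: khk_regular_def khk_D_eq)
  moreover have "continuous_on UNIV (khk_D e)"
    unfolding khk_D_def case_prod_unfold by (intro continuous_intros)
  ultimately show ?thesis
    using continuous_on_jac_num by (auto intro!: open_Collect_neq continuous_on_const)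
qed

lemma jac_num_eq_poly:
  "jac_num e x y = poly [:
     e^6*x^3 + 3*e^5*x^3 - 6*e^5*x^2 + 7*e^4*x^3 - 13*e^4*x^2 + 12*e^4*x + 5*e^3*x^3 - 16*e^3*x^2
       + 16*e^3*x - 8*e^3 + 3*e^2*x^2 + 3*e^2*x - 4*e^2 - e*x + 2*e + 1,
     3*e^5*x^2 + 6*e^4*x^2 - 12*e^4*x + 7*e^3*x^2 - 14*e^3*x + 12*e^3 - 2*e^2*x + 4*e^2 - e,
     3*e^4*x + 3*e^3*x - 6*e^3 - e^2,
     e^3 :] y"
  unfolding jac_num_def num1_def num2_def den_def by simp algebra

lemma AE_khk_regular:
  assumes "e \<noteq> 0"
  shows "AE p in lborel. p \<in> khk_regular e"
proof -
  have "AE p in lborel. jac_num e (fst p) (snd p) \<noteq> 0"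
  proof (rule AE_lborel_pair_neq_0)
    show "(\<lambda>p. jac_num e (fst p) (snd p)) \<in> borel_measurable borel"
      using continuous_on_jac_num by (rule borel_measurable_continuous_onI)
    show "AE x in lborel. finite {y. jac_num e (fst (x, y)) (snd (x, y)) = 0}"
      using assms by (intro AE_I2)
        (simp only: fst_conv snd_conv jac_num_eq_poly, rule poly_roots_finite, simp)
  qed
  then show ?thesis
    using AE_khk_D_neq_0[OF assms] by eventually_elim (auto simp: khk_regular_def khk_D_eq)
qed

text \<open>On the null line x = 0 the density takes the junk value 1 / 0 = 0.\<close>

definition khk_density :: "real \<Rightarrow> real \<times> real \<Rightarrow> real" where
  "khk_density e = (\<lambda>(x, y). 1 / \<bar>x * qfactor e x\<bar>)"

lemma borel_measurable_khk_density [measurable]: "khk_density e \<in> borel_measurable borel"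
proof -
  have [measurable]:
      "(\<lambda>p. fst p * qfactor e (fst p)) \<in> borel_measurable (borel :: (real \<times> real) measure)"
    unfolding qfactor_def by (intro borel_measurable_continuous_onI continuous_intros)
  show ?thesis
    unfolding khk_density_def case_prod_unfold by measurable
qed

lemma khk_density_eq: "khk_density e p = 1 / \<bar>fst p * qfactor e (fst p)\<bar>"
  by (simp add: khk_density_def case_prod_unfold)

lemma khk_density_khk_Phi:
  assumes "p \<in> khk_regular e"
  shows "khk_density e (khk_Phi e p) * \<bar>jac_num e (fst p) (snd p) / (den e (fst p) (snd p))^3\<bar>
    = khk_density e p"
proof -
  obtain x y where p: "p = (x, y)" and D: "den e x y \<noteq> 0" and K: "jac_num e x y \<noteq> 0"
    using assms by (cases p) (auto simp: khk_regular_def)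
  define c where "c = jac_num e x y / (den e x y)^3"
  have "c \<noteq> 0"
    using D K by (simp add: c_def)
  then have "1 / \<bar>x * qfactor e x * c\<bar> * \<bar>c\<bar> = 1 / \<bar>x * qfactor e x\<bar>"
    by (cases "x * qfactor e x = 0") (simp_all add: abs_mult)
  then show ?thesis
    by (simp add: p khk_density_eq fst_khk_Phi_qfactor[OF D] c_def)
qed

lemma khk_Phi_preserves_density:
  assumes "e \<noteq> 0" and "B \<in> sets borel"
  shows "emeasure (density lborel (khk_density e)) (khk_Phi e -` B)
       = emeasure (density lborel (khk_density e)) B"
proof (rule emeasure_density_vimage_eq)
  show "khk_regular e \<in> sets borel" "khk_Phi e ` khk_regular e \<in> sets borel"
    by (simp_all add: khk_Phi_image_regular borel_open open_khk_regular)
  show "AE p in lborel. p \<in> khk_regular e" "AE q in lborel. q \<in> khk_Phi e ` khk_regular e"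
    using assms(1) by (simp_all add: khk_Phi_image_regular AE_khk_regular)
  show "(\<lambda>p. \<bar>jac_num e (fst p) (snd p) / (den e (fst p) (snd p))^3\<bar>) \<in> borel_measurable borel"
  proof -
    have [measurable]: "(\<lambda>p. jac_num e (fst p) (snd p)) \<in> borel_measurable borel"
        "(\<lambda>p. den e (fst p) (snd p)) \<in> borel_measurable (borel :: (real \<times> real) measure)"
      unfolding jac_num_def num1_def num2_def den_def
      by (intro borel_measurable_continuous_onI continuous_intros)+
    show ?thesis
      by measurable
  qed
  show "khk_density e p \<ge> 0" for p
    by (simp add: khk_density_eq)
  fix p assume p: "p \<in> khk_regular e"
  then show "(khk_Phi e has_derivative khk_deriv e (fst p) (snd p)) (at p)"
    and "\<bar>jac_num e (fst p) (snd p) / (den e (fst p) (snd p))^3\<bar>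
      = \<bar>det_pair (khk_deriv e (fst p) (snd p))\<bar>"
    by (auto simp: khk_regular_def has_derivative_khk_Phi det_pair_khk_deriv)
  show "khk_density e (khk_Phi e p) * \<bar>jac_num e (fst p) (snd p) / (den e (fst p) (snd p))^3\<bar>
      = khk_density e p"
    using p by (rule khk_density_khk_Phi)
qed (simp_all add: assms(2) borel_measurable_khk_Phi inj_on_khk_Phi_regular)

lemma preserves_ac_measure_khk_Phi:
  assumes "e \<noteq> 0"
  shows "preserves_ac_measure (khk_Phi e)"
  unfolding preserves_ac_measure_def
proof (intro exI[of _ "density lborel (khk_density e)"] conjI ballI)
  show "sigma_finite_measure (density lborel (khk_density e))"
    by (subst sigma_finite_measure.sigma_finite_iff_density_finite[OF sigma_finite_lborel]) auto
  show "absolutely_continuous lborel (density lborel (khk_density e))"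
    by (rule absolutely_continuousI_density) measurable
  have "AE p in lborel. 0 < ennreal (khk_density e p)"
    using AE_lborel_fst_neq_0
    by eventually_elim (auto simp: khk_density_eq qfactor_pos[THEN less_imp_neq, symmetric])
  then show "emeasure (density lborel (khk_density e)) UNIV \<noteq> 0"
    by (intro emeasure_density_lborel_UNIV_neq_0) measurable
qed (simp_all add: borel_measurable_khk_Phi khk_Phi_preserves_density assms)

theorem proposition7:
  fixes e :: real
  assumes "e \<noteq> 0"
  shows "(\<exists>X. lie_symmetry (khk_Phi e) X) \<and> preserves_ac_measure (khk_Phi e)"
  using lie_symmetry_khk_Phi[OF assms] preserves_ac_measure_khk_Phi[OF assms] by blast

end
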